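(* For every integer $n\ge0$ with $n\neq1$, $$B_n=\frac{1}{2-2^n}\sum_{K=0}^{\lfloor n/2\rfloor}(-1)^K\sum_{\substack{1\le q_1,\dots,q_K\le\lfloor n/2\rfloor\\ 2q_1+\cdots+2q_K=n}}\frac{1}{(2q_1+1)\cdots(2q_K+1)}\,\frac{n!}{(2q_1)!\cdots(2q_K)!}.$$
   Context: The Bernoulli numbers $B_n$ are defined by $\sum_{n\ge0}B_nz^n/n!=z/(e^z-1)$. The inner sum is over ordered $K$-tuples (the $K=0$ term is the empty tuple, which contributes $1$ exactly when $n=0$). *)

theory Defs
  imports "HOL-Computational_Algebra.Formal_Power_Series" "HOL-Library.FuncSet"
begin

definition bernoulli :: "nat \<Rightarrow> real" where
  "bernoulli n = fact n * fps_nth (fps_X / (fps_exp 1 - 1)) n"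

end

theory Submission
  imports Defs
begin

text \<open>Let \<open>E(z) = z/(e\<^sup>z - 1)\<close>. Then \<open>2E(z) - E(2z) = 2z e\<^sup>z/(e\<^sup>2\<^sup>z - 1) = z/sinh z = 1/(1 + G(z))\<close>
  with \<open>G(z) = sinh z/z - 1 = \<Sum>\<^sub>q\<^sub>\<ge>\<^sub>1 z\<^sup>2\<^sup>q/(2q+1)!\<close>. Expanding \<open>1/(1 + G)\<close> as a geometric
  series, the terms \<open>G\<^sup>K\<close> with \<open>2K > n\<close> do not reach \<open>z\<^sup>n\<close> because \<open>G\<close> has order 2, and the
  coefficient of \<open>z\<^sup>n\<close> in \<open>G\<^sup>K\<close> is the inner sum over compositions of \<open>n\<close> into even parts.
  On the other side, the coefficient of \<open>z\<^sup>n\<close> in \<open>2E(z) - E(2z)\<close> is \<open>(2 - 2\<^sup>n) B\<^sub>n / n!\<close>.\<close>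

unbundle fps_syntax

lemma fps_const_prod: "fps_const (\<Prod>x\<in>A. f x) = (\<Prod>x\<in>A. fps_const (f x) :: 'a::comm_ring_1 fps)"
  by (induction A rule: infinite_finite_induct) (auto simp flip: fps_const_mult)

lemma fps_power_sum_monomials_nth:
  fixes c :: "'b \<Rightarrow> 'a::comm_ring_1" and w :: "'b \<Rightarrow> nat"
  assumes "finite A"
  shows "((\<Sum>x\<in>A. fps_const (c x) * fps_X ^ w x) ^ K) $ n =
    (\<Sum>q \<in> {q \<in> PiE {..<K} (\<lambda>_. A). (\<Sum>i<K. w (q i)) = n}. \<Prod>i<K. c (q i))"
proof -
  have "(\<Sum>x\<in>A. fps_const (c x) * fps_X ^ w x) ^ K =
      (\<Prod>i<K. \<Sum>x\<in>A. fps_const (c x) * fps_X ^ w x)"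
    by simp
  also have "\<dots> = (\<Sum>q\<in>PiE {..<K} (\<lambda>_. A). \<Prod>i<K. fps_const (c (q i)) * fps_X ^ w (q i))"
    by (rule prod_sum_PiE) (use assms in auto)
  also have "\<dots> = (\<Sum>q\<in>PiE {..<K} (\<lambda>_. A).
      fps_const (\<Prod>i<K. c (q i)) * fps_X ^ (\<Sum>i<K. w (q i)))"
    by (simp only: prod.distrib fps_const_prod power_sum)
  finally have "((\<Sum>x\<in>A. fps_const (c x) * fps_X ^ w x) ^ K) $ n =
      (\<Sum>q\<in>PiE {..<K} (\<lambda>_. A). if (\<Sum>i<K. w (q i)) = n then \<Prod>i<K. c (q i) else 0)"
    by (simp only: fps_sum_nth fps_mult_left_const_nth fps_X_power_nth eq_commute[of n]
        mult_1_right mult_zero_right if_distrib)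
  also have "\<dots> = (\<Sum>q \<in> {q \<in> PiE {..<K} (\<lambda>_. A). (\<Sum>i<K. w (q i)) = n}. \<Prod>i<K. c (q i))"
    using assms by (simp add: sum.inter_filter finite_PiE)
  finally show ?thesis .
qed

lemma fps_power_nth_cong:
  assumes "\<And>i. i \<le> n \<Longrightarrow> f $ i = g $ i" and "m \<le> n"
  shows "(f ^ K) $ m = (g ^ K) $ m"
  using assms(2)
proof (induction K arbitrary: m)
  case (Suc K)
  then show ?case
    unfolding power_Suc fps_mult_nth using assms(1) by (intro sum.cong) auto
qed simp

lemma fps_nth_eq_alternating_power_sum:
  fixes F G H :: "'a::comm_ring_1 fps"
  assumes inverse: "F * (1 + G) = 1" and order: "G = fps_X ^ d * H" and "n < d * Suc M"
  shows "F $ n = (\<Sum>K\<le>M. (-1) ^ K * (G ^ K) $ n)"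
proof -
  define x where "x = fps_const (-1) * G"
  have "(\<Sum>K\<le>M. x ^ K) = F * ((1 + G) * (\<Sum>K\<le>M. x ^ K))"
    by (simp add: mult.assoc[symmetric] inverse)
  also have "1 + G = 1 - x"
    by (simp add: x_def flip: fps_const_neg)
  also have "(1 - x) * (\<Sum>K\<le>M. x ^ K) = 1 - x ^ Suc M"
    by (rule sum_gp_basic)
  also have "x ^ Suc M = fps_X ^ (d * Suc M) * (fps_const (-1) * H) ^ Suc M"
    by (simp only: x_def order mult.left_commute[of _ "fps_X ^ d"] power_mult_distrib power_mult)
  finally have "(\<Sum>K\<le>M. x ^ K) = F - fps_X ^ (d * Suc M) * (F * (fps_const (-1) * H) ^ Suc M)"
    by (simp add: algebra_simps)
  then have "(\<Sum>K\<le>M. (x ^ K) $ n) = F $ n"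
    using \<open>n < d * Suc M\<close> by (simp add: fps_sum_nth[symmetric] fps_X_power_mult_nth)
  then show ?thesis
    by (simp add: x_def power_mult_distrib)
qed

definition bernoulli_egf :: "real fps" where
  "bernoulli_egf = fps_X / (fps_exp 1 - 1)"

lemma bernoulli_egf_times: "bernoulli_egf * (fps_exp 1 - 1) = fps_X"
proof -
  have "(fps_exp 1 - 1 :: real fps) $ 1 \<noteq> 0"
    by (simp add: fps_exp_def)
  then have "fps_exp 1 - 1 \<noteq> (0 :: real fps)" "subdegree (fps_exp 1 - 1 :: real fps) \<le> 1"
    by (auto intro: subdegree_leI)
  then have "(fps_exp 1 - 1) dvd (fps_X :: real fps)"
    by (simp add: fps_dvd_iff)
  then show ?thesis
    unfolding bernoulli_egf_def by (rule dvd_div_mult_self)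
qed

lemma bernoulli_egf_dilated_times:
  "(bernoulli_egf oo (fps_const 2 * fps_X)) * (fps_exp 2 - 1) = fps_const 2 * fps_X"
proof -
  have "(bernoulli_egf * (fps_exp 1 - 1)) oo (fps_const 2 * fps_X) = fps_X oo (fps_const 2 * fps_X)"
    by (simp only: bernoulli_egf_times)
  then show ?thesis
    by (simp add: fps_compose_mult_distrib fps_compose_sub_distrib)
qed

definition sinhc :: "real fps" where
  "sinhc = Abs_fps (\<lambda>k. if even k then 1 / fact (k + 1) else 0)"

lemma fps_X_times_sinhc: "fps_const 2 * fps_X * sinhc = fps_exp 1 - fps_exp (-1)"
proof (rule fps_ext)
  fix k
  show "(fps_const 2 * fps_X * sinhc) $ k = (fps_exp 1 - fps_exp (-1)) $ k"
  proof (cases k)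
    case (Suc m)
    then show ?thesis
      by (cases "even m") (simp_all add: sinhc_def fps_exp_nth mult.assoc algebra_simps)
  qed (simp add: fps_exp_nth)
qed

lemma sinhc_minus_one_eq: "sinhc - 1 = fps_X ^ 2 * Abs_fps (\<lambda>k. sinhc $ (k + 2))"
proof (rule fps_ext)
  fix k
  show "(sinhc - 1) $ k = (fps_X ^ 2 * Abs_fps (\<lambda>k. sinhc $ (k + 2))) $ k"
  proof (cases "k < 2")
    case True
    then show ?thesis
      by (auto simp: fps_X_power_mult_nth sinhc_def less_2_cases_iff)
  next
    case False
    then have "k = Suc (Suc (k - 2))"
      by simp
    then show ?thesis
      by (simp add: fps_X_power_mult_nth)
  qed
qed

lemma bernoulli_egf_difference_times_sinhc:
  "(fps_const 2 * bernoulli_egf - (bernoulli_egf oo (fps_const 2 * fps_X))) * sinhc = 1"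
proof -
  define e :: "real fps" where "e = fps_exp 1"
  define F where "F = fps_const 2 * bernoulli_egf - (bernoulli_egf oo (fps_const 2 * fps_X))"
  have exp_2: "fps_exp 2 = e * e" and exp_minus_1: "fps_exp (-1) * e = 1"
    unfolding e_def by (simp_all flip: fps_exp_add_mult)
  have "F * (e - fps_exp (-1)) * e = F * (e * e - 1)"
    by (simp only: left_diff_distrib right_diff_distrib exp_minus_1 mult.assoc)
  also have "\<dots> = fps_const 2 * (bernoulli_egf * (e - 1)) * (e + 1)
      - (bernoulli_egf oo (fps_const 2 * fps_X)) * (fps_exp 2 - 1)"
    by (simp add: F_def exp_2 algebra_simps)
  also have "\<dots> = fps_const 2 * fps_X * e"
    unfolding bernoulli_egf_times[folded e_def] bernoulli_egf_dilated_times
    by (simp add: algebra_simps)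
  finally have "F * (e - fps_exp (-1)) * e = fps_const 2 * fps_X * e" .
  moreover have "e \<noteq> 0"
    using fps_nonzero_nth[of e] by (auto simp: e_def fps_exp_nth)
  ultimately have "F * (e - fps_exp (-1)) = fps_const 2 * fps_X"
    by simp
  then have "(fps_const 2 * fps_X) * (F * sinhc) = (fps_const 2 * fps_X) * 1"
    by (simp add: e_def fps_X_times_sinhc[symmetric] algebra_simps)
  then show ?thesis
    by (simp add: F_def)
qed

lemma sinhc_minus_one_power_nth:
  "((sinhc - 1) ^ K) $ n =
    (\<Sum>q \<in> {q \<in> PiE {..<K} (\<lambda>_. {1..n div 2}). (\<Sum>i<K. 2 * q i) = n}. \<Prod>i<K. 1 / fact (2 * q i + 1))"
proof -
  let ?S = "\<Sum>q\<in>{1..n div 2}. fps_const (1 / fact (2 * q + 1)) * fps_X ^ (2 * q) :: real fps"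
  have "?S $ k = (sinhc - 1) $ k" if "k \<le> n" for k
  proof -
    have "?S $ k = (\<Sum>q\<in>{1..n div 2}. if k = 2 * q then 1 / fact (k + 1) else 0)"
      by (auto simp: fps_sum_nth intro: sum.cong)
    also have "\<dots> = (sinhc - 1) $ k"
    proof (cases "even k")
      case True
      then show ?thesis
        using that by (auto simp: sinhc_def sum.delta' elim!: evenE)
    next
      case False
      then show ?thesis
        by (auto simp: sinhc_def odd_pos intro!: sum.neutral)
    qed
    finally show ?thesis .
  qed
  then have "((sinhc - 1) ^ K) $ n = (?S ^ K) $ n"
    by (intro fps_power_nth_cong[of n]) auto
  then show ?thesis
    by (simp add: fps_power_sum_monomials_nth)
qed

theorem mainTheorem4:
  fixes n :: nat
  assumes "n \<noteq> 1"
  shows "bernoulli n =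
    1 / (2 - 2 ^ n) *
    (\<Sum>K = 0..n div 2. (-1) ^ K *
      (\<Sum>q \<in> {q \<in> PiE {..<K} (\<lambda>_. {1..n div 2}). (\<Sum>i<K. 2 * q i) = n}.
         (1 / (\<Prod>i<K. real (2 * q i + 1))) * (fact n / (\<Prod>i<K. fact (2 * q i)))))"
proof -
  define S where "S = (\<Sum>K\<le>n div 2. (-1) ^ K * ((sinhc - 1) ^ K) $ n)"
  have summand: "1 / (\<Prod>i<K. real (2 * q i + 1)) * (fact n / (\<Prod>i<K. fact (2 * q i)))
      = fact n * (\<Prod>i<K. 1 / fact (2 * q i + 1))" for K q
    by (simp add: prod_dividef prod.distrib)
  have "(2 - 2 ^ n) * bernoulli_egf $ n =
      (fps_const 2 * bernoulli_egf - (bernoulli_egf oo (fps_const 2 * fps_X))) $ n"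
    by (simp add: left_diff_distrib)
  also have "\<dots> = S"
    unfolding S_def
    by (rule fps_nth_eq_alternating_power_sum[OF _ sinhc_minus_one_eq])
       (use bernoulli_egf_difference_times_sinhc in simp_all)
  finally have "(2 - 2 ^ n) * bernoulli n = fact n * S"
    by (simp add: bernoulli_def bernoulli_egf_def)
  moreover have "(2 - 2 ^ n :: real) \<noteq> 0"
    using assms power_inject_exp[of 2 n 1] by auto
  ultimately have "bernoulli n = 1 / (2 - 2 ^ n) * (fact n * S)"
    by (simp add: field_simps)
  also have "fact n * S = (\<Sum>K = 0..n div 2. (-1) ^ K *
      (\<Sum>q \<in> {q \<in> PiE {..<K} (\<lambda>_. {1..n div 2}). (\<Sum>i<K. 2 * q i) = n}.
         (1 / (\<Prod>i<K. real (2 * q i + 1))) * (fact n / (\<Prod>i<K. fact (2 * q i)))))"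
    by (simp only: S_def summand sinhc_minus_one_power_nth sum_distrib_left atLeast0AtMost
        mult.left_commute)
  finally show ?thesis .
qed

end
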